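(* Let $(\mathbf{x}_t,y_t)_{t\ge0}$ be i.i.d. copies of $(\mathbf{x},y)\in\mathbb{R}^d\times\{\pm1\}$ with, almost surely, $\|\mathbf{x}\|\le1$ and $y\mathbf{x}^\top\mathbf{w}_*\ge\gamma$ for some $\gamma>0$ and unit vector $\mathbf{w}_*$. Let $L_t(\mathbf{w}):=\ln(1+\exp(-y_t\mathbf{x}_t^\top\mathbf{w}))$ and run $\mathbf{w}_{t+1}=\mathbf{w}_t-\eta\nabla L_t(\mathbf{w}_t)$ with $\eta>0$ and any $\mathbf{w}_0$. For any $\mathbf{u}_1$, with $\mathbf{u}_2=\frac{\eta}{2\gamma}\mathbf{w}_*$ and $\mathbf{u}=\mathbf{u}_1+\mathbf{u}_2$, almost surely for every $t\ge1$, \[\frac{\|\mathbf{w}_t-\mathbf{u}\|^2}{2\eta t}+\frac1t\sum_{k=0}^{t-1}L_k(\mathbf{w}_k)\le\frac1t\sum_{k=0}^{t-1}L_k(\mathbf{u}_1)+\frac{\|\mathbf{w}_0-\mathbf{u}\|^2}{2\eta t}.\] *)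

theory Defs
  imports "HOL-Probability.Probability"
begin

definition logloss :: "real^'d \<Rightarrow> real \<Rightarrow> real^'d \<Rightarrow> real" where
  "logloss x y w = ln (1 + exp (- (y * (x \<bullet> w))))"

end

theory Submission
  imports Defs
begin

text \<open>
  On almost every sample path every sample satisfies \<open>\<parallel>x\<^sub>t\<parallel> \<le> 1\<close>, \<open>\<bar>y\<^sub>t\<bar> \<le> 1\<close> and
  \<open>y\<^sub>t x\<^sub>t\<^sup>T w\<^sub>* \<ge> \<gamma>\<close>, and on such a path the bound is deterministic. The gradient of \<open>L\<^sub>t\<close> at \<open>w\<^sub>t\<close> is
  \<open>-s\<^sub>t y\<^sub>t x\<^sub>t\<close> with \<open>s\<^sub>t = 1/(1 + exp (y\<^sub>t x\<^sub>t\<^sup>T w\<^sub>t)) \<in> (0,1)\<close>. Expanding \<open>\<parallel>w\<^sub>t\<^sub>+\<^sub>1 - u\<parallel>\<^sup>2\<close>, convexity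
  of \<open>L\<^sub>t\<close> bounds the inner product of the gradient with \<open>w\<^sub>t - u\<^sub>1\<close> below by \<open>L\<^sub>t(w\<^sub>t) - L\<^sub>t(u\<^sub>1)\<close>,
  and the margin bounds its inner product with \<open>w\<^sub>*\<close> above by \<open>-\<gamma> s\<^sub>t\<close>. So the shift
  \<open>(\<eta>/(2\<gamma>)) w\<^sub>*\<close> of the comparator contributes \<open>-\<eta>\<^sup>2 s\<^sub>t\<close>, which cancels the quadratic term
  \<open>\<eta>\<^sup>2 \<parallel>\<nabla>L\<^sub>t(w\<^sub>t)\<parallel>\<^sup>2 \<le> \<eta>\<^sup>2 s\<^sub>t\<close>. Hence \<open>\<parallel>w\<^sub>t - u\<parallel>\<^sup>2 + 2\<eta> \<Sum>\<^sub>k\<^sub><\<^sub>t (L\<^sub>k(w\<^sub>k) - L\<^sub>k(u\<^sub>1))\<close> is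
  nonincreasing in \<open>t\<close>, for every step size \<open>\<eta> > 0\<close>.
\<close>

lemma ln_one_plus_exp_neg_has_derivative:
  "((\<lambda>a. ln (1 + exp (- a))) has_real_derivative - 1 / (1 + exp a)) (at a)"
proof -
  have "((\<lambda>a. ln (1 + exp (- a))) has_real_derivative exp (- a) * - 1 / (1 + exp (- a))) (at a)"
    by (auto intro!: derivative_eq_intros simp: add_pos_pos)
  moreover have "exp (- a) * - 1 / (1 + exp (- a)) = - 1 / (1 + exp a)"
    by (simp add: exp_minus field_simps add_pos_pos)
  ultimately show ?thesis by simp
qed

lemma convex_ln_one_plus_exp_neg: "convex_on UNIV (\<lambda>a::real. ln (1 + exp (- a)))"
  by (rule convex_on_realI[OF _ ln_one_plus_exp_neg_has_derivative])
     (auto simp: divide_simps add_pos_pos)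

lemma ln_one_plus_exp_neg_above_tangent:
  fixes a b :: real
  shows "ln (1 + exp (- a)) - (b - a) / (1 + exp a) \<le> ln (1 + exp (- b))"
  using convex_on_imp_above_tangent[OF convex_ln_one_plus_exp_neg,
      of a b "- 1 / (1 + exp a)"] ln_one_plus_exp_neg_has_derivative[of a]
  by simp

lemma logloss_has_derivative:
  "(logloss x y has_derivative (\<lambda>h. ((- y / (1 + exp (y * (x \<bullet> w)))) *\<^sub>R x) \<bullet> h)) (at w)"
proof -
  have "((\<lambda>w. ln (1 + exp (- (y * (x \<bullet> w))))) has_derivative
          (\<lambda>h. - 1 / (1 + exp (y * (x \<bullet> w))) * (y * (x \<bullet> h)))) (at w)"
    by (rule has_derivative_compose[of "\<lambda>w. y * (x \<bullet> w)" _ _ _ "\<lambda>a. ln (1 + exp (- a))",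
          OF _ ln_one_plus_exp_neg_has_derivative[unfolded has_field_derivative_def]])
       (auto intro!: derivative_eq_intros)
  then show ?thesis
    unfolding logloss_def by (simp add: mult.commute)
qed

lemma logloss_gradient:
  assumes "(logloss x y has_derivative (\<lambda>h. g \<bullet> h)) (at w)"
  shows "g = (- y / (1 + exp (y * (x \<bullet> w)))) *\<^sub>R x"
  using has_derivative_unique[OF assms logloss_has_derivative] vector_eq_rdot
  by metis

lemma logloss_above_tangent:
  assumes "(logloss x y has_derivative (\<lambda>h. g \<bullet> h)) (at w)"
  shows "logloss x y w + g \<bullet> (u - w) \<le> logloss x y u"
  using ln_one_plus_exp_neg_above_tangent[of "y * (x \<bullet> w)" "y * (x \<bullet> u)"]
  unfolding logloss_gradient[OF assms] logloss_def
  by (simp add: inner_diff_right diff_divide_distrib algebra_simps)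

lemma logloss_gradient_step:
  fixes x w u1 wstar g :: "real^'d"
  assumes x: "norm x \<le> 1" and y: "\<bar>y\<bar> \<le> 1" and margin: "y * (x \<bullet> wstar) \<ge> \<gamma>"
    and "\<gamma> > 0" "\<eta> > 0"
    and grad: "(logloss x y has_derivative (\<lambda>h. g \<bullet> h)) (at w)"
  defines "u \<equiv> u1 + (\<eta> / (2 * \<gamma>)) *\<^sub>R wstar"
  shows "(norm (w - \<eta> *\<^sub>R g - u))\<^sup>2 + 2 * \<eta> * logloss x y w
           \<le> (norm (w - u))\<^sup>2 + 2 * \<eta> * logloss x y u1"
proof -
  define s where "s = 1 / (1 + exp (y * (x \<bullet> w)))"
  have s: "0 \<le> s" "s \<le> 1"
    unfolding s_def by (auto simp: field_simps add_pos_pos)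
  have g: "g = (- y * s) *\<^sub>R x"
    using logloss_gradient[OF grad] by (simp add: s_def)
  have margin_g: "g \<bullet> wstar \<le> - s * \<gamma>"
    using mult_left_mono[OF margin s(1)] by (simp add: g mult_ac)
  have "norm g \<le> s"
    using mult_mono[OF y x] s by (simp add: g abs_mult mult.commute mult.left_commute mult_left_le)
  then have "(norm g)\<^sup>2 \<le> s\<^sup>2"
    by (simp add: power_mono)
  also have "\<dots> \<le> s"
    using s by (simp add: power2_eq_square mult_left_le)
  finally have "\<eta>\<^sup>2 * (norm g)\<^sup>2 \<le> \<eta>\<^sup>2 * s"
    by (simp add: mult_left_mono)
  moreover have "2 * \<eta> * ((\<eta> / (2 * \<gamma>)) * (g \<bullet> wstar)) \<le> - \<eta>\<^sup>2 * s"
    using mult_left_mono[OF margin_g, of "\<eta>\<^sup>2"] \<open>\<gamma> > 0\<close> by (simp add: field_simps power2_eq_square)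
  moreover have "2 * \<eta> * (logloss x y w - logloss x y u1) \<le> 2 * \<eta> * (g \<bullet> (w - u1))"
    using logloss_above_tangent[OF grad, of u1] \<open>\<eta> > 0\<close> by (simp add: inner_diff_right)
  moreover have "(norm (w - \<eta> *\<^sub>R g - u))\<^sup>2
      = (norm (w - u))\<^sup>2 - 2 * \<eta> * (g \<bullet> (w - u1)) + 2 * \<eta> * ((\<eta> / (2 * \<gamma>)) * (g \<bullet> wstar))
        + \<eta>\<^sup>2 * (norm g)\<^sup>2"
    unfolding u_def power2_norm_eq_inner
    by (simp add: inner_diff_left inner_diff_right inner_add_right inner_commute
        algebra_simps power2_eq_square)
  ultimately show ?thesis
    by (simp add: algebra_simps)
qed

lemma sum_bound_of_potential_decrease:
  fixes \<Phi> a b :: "nat \<Rightarrow> real"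
  assumes "\<And>k. \<Phi> (Suc k) + a k \<le> \<Phi> k + b k"
  shows "\<Phi> t + (\<Sum>k<t. a k) \<le> \<Phi> 0 + (\<Sum>k<t. b k)"
proof (induction t)
  case (Suc t)
  then show ?case using assms[of t] by simp
qed simp

lemma AE_all_identically_distributed:
  fixes Z :: "nat \<Rightarrow> 'a \<Rightarrow> 'b::topological_space"
  assumes "Z\<^sub>0 \<in> borel_measurable M" and "\<And>t. Z t \<in> borel_measurable M"
    and "\<And>t. distr M borel (Z t) = distr M borel Z\<^sub>0"
    and "S \<in> sets borel" and "AE \<omega> in M. Z\<^sub>0 \<omega> \<in> S"
  shows "AE \<omega> in M. \<forall>t. Z t \<omega> \<in> S"
proof -
  have S: "{z \<in> space borel. z \<in> S} \<in> sets borel"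
    using assms(4) by simp
  have "AE \<omega> in M. Z t \<omega> \<in> S" for t
  proof -
    have "AE z in distr M borel Z\<^sub>0. z \<in> S"
      using assms(5) by (subst AE_distr_iff[OF assms(1) S])
    then have "AE z in distr M borel (Z t). z \<in> S"
      unfolding assms(3) .
    then show ?thesis
      by (subst (asm) AE_distr_iff[OF assms(2) S])
  qed
  then show ?thesis by (simp add: AE_all_countable)
qed

lemma logistic_sgd_average_bound:
  fixes x :: "nat \<Rightarrow> real^'d" and y :: "nat \<Rightarrow> real" and w :: "nat \<Rightarrow> real^'d"
    and w0 wstar u1 :: "real^'d"
  assumes "\<And>t. norm (x t) \<le> 1" and "\<And>t. \<bar>y t\<bar> \<le> 1" and "\<And>t. y t * (x t \<bullet> wstar) \<ge> \<gamma>"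
    and "\<gamma> > 0" and "\<eta> > 0"
    and "\<And>t. \<exists>g. (logloss (x t) (y t) has_derivative (\<lambda>h. g \<bullet> h)) (at (w t))
                   \<and> w (Suc t) = w t - \<eta> *\<^sub>R g"
    and "w 0 = w0" and "t \<ge> 1"
  defines "u \<equiv> u1 + (\<eta> / (2 * \<gamma>)) *\<^sub>R wstar"
  shows "(norm (w t - u))\<^sup>2 / (2 * \<eta> * real t) + (1 / real t) * (\<Sum>k<t. logloss (x k) (y k) (w k))
           \<le> (1 / real t) * (\<Sum>k<t. logloss (x k) (y k) u1) + (norm (w0 - u))\<^sup>2 / (2 * \<eta> * real t)"
proof -
  have "(norm (w (Suc k) - u))\<^sup>2 + 2 * \<eta> * logloss (x k) (y k) (w k)
          \<le> (norm (w k - u))\<^sup>2 + 2 * \<eta> * logloss (x k) (y k) u1" for k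
    using assms(6)[of k] logloss_gradient_step[OF assms(1-5)] unfolding u_def by metis
  then have "(norm (w t - u))\<^sup>2 + 2 * \<eta> * (\<Sum>k<t. logloss (x k) (y k) (w k))
               \<le> (norm (w0 - u))\<^sup>2 + 2 * \<eta> * (\<Sum>k<t. logloss (x k) (y k) u1)"
    using sum_bound_of_potential_decrease[where \<Phi> = "\<lambda>k. (norm (w k - u))\<^sup>2"] \<open>w 0 = w0\<close>
    by (simp add: sum_distrib_left)
  moreover have "2 * \<eta> * real t > 0"
    using \<open>\<eta> > 0\<close> \<open>t \<ge> 1\<close> by simp
  ultimately have "((norm (w t - u))\<^sup>2 + 2 * \<eta> * (\<Sum>k<t. logloss (x k) (y k) (w k))) / (2 * \<eta> * real t)
      \<le> ((norm (w0 - u))\<^sup>2 + 2 * \<eta> * (\<Sum>k<t. logloss (x k) (y k) u1)) / (2 * \<eta> * real t)"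
    by (intro divide_right_mono) auto
  with \<open>\<eta> > 0\<close> show ?thesis
    by (simp add: add_divide_distrib add.commute)
qed

theorem mainTheorem16:
  fixes M :: "'a measure"
    and X :: "'a \<Rightarrow> real^'d" and Y :: "'a \<Rightarrow> real"
    and x :: "nat \<Rightarrow> 'a \<Rightarrow> real^'d" and y :: "nat \<Rightarrow> 'a \<Rightarrow> real"
    and w :: "nat \<Rightarrow> 'a \<Rightarrow> real^'d"
    and w0 wstar u1 :: "real^'d"
    and \<gamma> \<eta> :: real
  assumes "prob_space M"
    and "X \<in> borel_measurable M" and "Y \<in> borel_measurable M"
    and "\<And>t. x t \<in> borel_measurable M" and "\<And>t. y t \<in> borel_measurable M"
    and "prob_space.indep_vars M (\<lambda>_. borel) (\<lambda>t \<omega>. (x t \<omega>, y t \<omega>)) UNIV"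
    and "\<And>t. distr M borel (\<lambda>\<omega>. (x t \<omega>, y t \<omega>)) = distr M borel (\<lambda>\<omega>. (X \<omega>, Y \<omega>))"
    and "\<gamma> > 0" and "norm wstar = 1"
    and "AE \<omega> in M. norm (X \<omega>) \<le> 1 \<and> Y \<omega> \<in> {-1, 1} \<and> Y \<omega> * (X \<omega> \<bullet> wstar) \<ge> \<gamma>"
    and "\<eta> > 0"
    and "\<And>\<omega>. w 0 \<omega> = w0"
    and "\<And>\<omega> t. \<exists>g. (logloss (x t \<omega>) (y t \<omega>) has_derivative (\<lambda>h. g \<bullet> h)) (at (w t \<omega>))
                     \<and> w (Suc t) \<omega> = w t \<omega> - \<eta> *\<^sub>R g"
  shows "AE \<omega> in M. \<forall>t\<ge>1.
           let u = u1 + (\<eta> / (2 * \<gamma>)) *\<^sub>R wstar in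
           (norm (w t \<omega> - u))\<^sup>2 / (2 * \<eta> * real t)
             + (1 / real t) * (\<Sum>k<t. logloss (x k \<omega>) (y k \<omega>) (w k \<omega>))
           \<le> (1 / real t) * (\<Sum>k<t. logloss (x k \<omega>) (y k \<omega>) u1)
             + (norm (w0 - u))\<^sup>2 / (2 * \<eta> * real t)"
proof -
  let ?S = "{z :: (real^'d) \<times> real. norm (fst z) \<le> 1 \<and> \<bar>snd z\<bar> \<le> 1 \<and> snd z * (fst z \<bullet> wstar) \<ge> \<gamma>}"
  have "closed ?S"
    by (intro closed_Collect_conj closed_Collect_le continuous_intros)
  moreover have "AE \<omega> in M. (X \<omega>, Y \<omega>) \<in> ?S"
    using assms(10) by (rule eventually_mono) auto
  ultimately have "AE \<omega> in M. \<forall>t. (x t \<omega>, y t \<omega>) \<in> ?S"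
    using assms(2-5,7)
    by (intro AE_all_identically_distributed[where Z\<^sub>0 = "\<lambda>\<omega>. (X \<omega>, Y \<omega>)"]) (auto simp: borel_closed)
  then show ?thesis
    by (rule eventually_mono)
       (intro allI impI, unfold Let_def, rule logistic_sgd_average_bound,
        use assms(8,11-13) in auto)
qed

end
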